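(* Let $H\in(\tfrac12,1)$ and $n>1$ an integer, and let $i_n=\lfloor x_n\rfloor+1$. The function $I_n:\{1,\dots,n-1\}\to(0,\infty)$, $I_n(i)=\int_{i-1}^i x^{\frac12-H}\phi_n^H(x)\,dx$, is decreasing on $\{1,\dots,i_n-1\}$ and increasing on $\{i_n+1,\dots,n-1\}$.
   Context: $\phi_n^H(x)=(n-x)^{H-\frac12}-(n-1-x)^{H-\frac12}$. Here $x_n\in(0,n-1)$ is the unique point such that $x\mapsto x^{\frac12-H}\phi_n^H(x)$ is strictly decreasing on $(0,x_n)$ and strictly increasing on $(x_n,n-1)$; explicitly $x_n=n-1-\Big(\big(1+\frac1{n-1}\big)^{\frac2{3-2H}}-1\Big)^{-1}$. *)

theory Defs
  imports "HOL-Analysis.Analysis"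
begin

definition phiH :: "real \<Rightarrow> nat \<Rightarrow> real \<Rightarrow> real" where
  "phiH H n x = (real n - x) powr (H - 1/2) - (real n - 1 - x) powr (H - 1/2)"

definition xn :: "real \<Rightarrow> nat \<Rightarrow> real" where
  "xn H n = real n - 1 - 1 / ((1 + 1 / (real n - 1)) powr (2 / (3 - 2*H)) - 1)"

definition In :: "real \<Rightarrow> nat \<Rightarrow> nat \<Rightarrow> real" where
  "In H n i = integral {real i - 1 .. real i} (\<lambda>x. x powr (1/2 - H) * phiH H n x)"

definition i_n :: "real \<Rightarrow> nat \<Rightarrow> int" where
  "i_n H n = \<lfloor>xn H n\<rfloor> + 1"

end

theory Submission
  imports Defs
begin

text \<open>
  The integrand \<open>\<psi>(x) = x powr (1/2 - H) * \<phi>(x)\<close> of \<open>I\<^sub>n\<close> has derivative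
  \<open>(H - 1/2) x powr (-1/2 - H) (n-1-x) powr (H - 3/2) \<sigma>(x)\<close>, where
  \<open>\<sigma>(x) = (n-1) - n ((n-1-x)/(n-x)) powr (3/2 - H)\<close>. Since \<open>(n-1-x)/(n-x)\<close> decreases in
  \<open>x\<close>, \<open>\<sigma>\<close> is strictly increasing, and it vanishes exactly at \<open>x\<^sub>n\<close>; so \<open>\<psi>\<close> strictly
  decreases on \<open>(0, x\<^sub>n]\<close> and strictly increases on \<open>[x\<^sub>n, n-1]\<close>. Where \<open>\<psi>\<close> strictly
  decreases on \<open>(i-1, j]\<close> with \<open>i < j\<close>, the integral over \<open>[j-1, j]\<close> is below
  \<open>\<psi>(j-1) \<le> \<psi>(i)\<close>, which is below the integral over \<open>[i-1, i]\<close>; the increasing case is the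
  same argument for \<open>-\<psi>\<close>. All of this works for \<open>1/2 < H < 3/2\<close>; integrability at \<open>0\<close>
  comes from the bound \<open>\<psi>(x) \<le> n powr (H - 1/2) * x powr (1/2 - H)\<close>.
\<close>

lemma integral_unit_interval_less_of_strict_antimono:
  fixes g :: "real \<Rightarrow> real" and a b :: real
  assumes ab: "a + 1 \<le> b" and dec: "strict_antimono_on {a - 1<..b} g"
    and int: "g integrable_on {a - 1..a}" and cont: "continuous_on {b - 1..b} g"
  shows "integral {b - 1..b} g < integral {a - 1..a} g"
proof -
  have "integral {b - 1..b} g < integral {b - 1..b} (\<lambda>_. g (b - 1))"
    using ab by (intro integral_less_real cont continuous_intros) (auto intro!: monotone_onD[OF dec])
  also have "\<dots> = g (b - 1)" by simp
  also have "\<dots> \<le> g a"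
    using ab monotone_onD[OF dec, of a "b - 1"] by (cases "a = b - 1") auto
  also have "\<dots> = integral {a - 1<..<a} (\<lambda>_. g a)"
    by (simp flip: integral_open_interval_real)
  also have "\<dots> \<le> integral {a - 1<..<a} g"
    using ab int by (intro integral_le) (auto simp: integrable_on_open_interval_real
        intro!: less_imp_le[OF monotone_onD[OF dec]])
  finally show ?thesis by (simp add: integral_open_interval_real)
qed

corollary integral_unit_interval_less_of_strict_mono:
  fixes g :: "real \<Rightarrow> real" and a b :: real
  assumes "a + 1 \<le> b" and "strict_mono_on {a - 1..b} g" and "continuous_on {a - 1..b} g"
  shows "integral {a - 1..a} g < integral {b - 1..b} g"
proof -
  have "integral {b - 1..b} (\<lambda>x. - g x) < integral {a - 1..a} (\<lambda>x. - g x)"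
  proof (rule integral_unit_interval_less_of_strict_antimono)
    show "strict_antimono_on {a - 1<..b} (\<lambda>x. - g x)"
      using assms(2) by (auto simp: monotone_on_def)
    have "continuous_on {a - 1..b} (\<lambda>x. - g x)"
      using assms(3) by (rule continuous_on_minus)
    then show "(\<lambda>x. - g x) integrable_on {a - 1..a}" "continuous_on {b - 1..b} (\<lambda>x. - g x)"
      using assms(1) by (auto intro!: integrable_continuous_interval elim!: continuous_on_subset)
  qed fact
  then show ?thesis by simp
qed

definition psiH :: "real \<Rightarrow> nat \<Rightarrow> real \<Rightarrow> real" where
  "psiH H n x = x powr (1/2 - H) * phiH H n x"

definition sigmaH :: "real \<Rightarrow> nat \<Rightarrow> real \<Rightarrow> real" where
  "sigmaH H n x = real n - 1 - real n * ((real n - 1 - x) / (real n - x)) powr (3/2 - H)"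

lemma In_eq_integral_psiH: "In H n i = integral {real i - 1..real i} (psiH H n)"
  by (simp add: In_def psiH_def[abs_def])

lemma has_real_derivative_psiH:
  assumes "0 < x" "x < real n - 1"
  shows "(psiH H n has_real_derivative
    (H - 1/2) * x powr (-1/2 - H) * (real n - 1 - x) powr (H - 3/2) * sigmaH H n x) (at x)"
proof -
  define a where "a = H - 1/2"
  have exps: "1/2 - H = -a" "H - 1/2 = a" by (simp_all add: a_def)
  have pos: "0 < real n - x" "0 < real n - 1 - x" using assms by auto
  have "(psiH H n has_real_derivative
      -a * x powr (-a - 1) * ((real n - x) powr a - (real n - 1 - x) powr a)
      + x powr (-a) * (a * (real n - 1 - x) powr (a - 1) - a * (real n - x) powr (a - 1))) (at x)"
    unfolding psiH_def[abs_def] phiH_def exps using assms pos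
    by (auto intro!: derivative_eq_intros simp: algebra_simps)
  moreover have "-a * x powr (-a - 1) * ((real n - x) powr a - (real n - 1 - x) powr a)
      + x powr (-a) * (a * (real n - 1 - x) powr (a - 1) - a * (real n - x) powr (a - 1))
    = a * x powr (-a - 1)
      * ((real n - 1) * (real n - 1 - x) powr (a - 1) - real n * (real n - x) powr (a - 1))"
  proof -
    have split: "y powr c = y * y powr (c - 1)" if "0 < y" for y c :: real
      using that by (simp add: powr_diff)
    show ?thesis
      unfolding split[OF assms(1), of "-a"] split[OF pos(1), of a] split[OF pos(2), of a]
      by (simp add: algebra_simps)
  qed
  moreover have "\<dots> = (H - 1/2) * x powr (-1/2 - H) * (real n - 1 - x) powr (H - 3/2) * sigmaH H n x"
  proof -
    have exps': "-1/2 - H = -a - 1" "H - 3/2 = a - 1" "3/2 - H = 1 - a" by (simp_all add: a_def)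
    have inverse: "y powr (a - 1) * y powr (1 - a) = 1" if "0 < y" for y :: real
      using that by (simp flip: powr_add)
    show ?thesis
      unfolding sigmaH_def powr_divide exps exps'
      using inverse[OF pos(1)] inverse[OF pos(2)] pos by (simp add: field_simps)
  qed
  ultimately show ?thesis by simp
qed

lemma strict_mono_on_sigmaH:
  assumes "H < 3/2" "0 < n"
  shows "strict_mono_on {..<real n - 1} (sigmaH H n)"
proof (rule strict_mono_onI)
  fix x y assume xy: "x \<in> {..<real n - 1}" "y \<in> {..<real n - 1}" "x < y"
  have "(real n - 1 - y) / (real n - y) < (real n - 1 - x) / (real n - x)"
    using xy by (simp add: field_simps)
  then have "((real n - 1 - y) / (real n - y)) powr (3/2 - H) < ((real n - 1 - x) / (real n - x)) powr (3/2 - H)"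
    using xy assms(1) by (intro powr_less_mono2) auto
  then show "sigmaH H n x < sigmaH H n y"
    using assms(2) by (simp add: sigmaH_def)
qed

lemma xn_bounds:
  assumes "1/2 < H" "H < 3/2" "1 < n"
  shows "0 < xn H n" "xn H n < real n - 1"
proof -
  define m where "m = real n - 1"
  define c where "c = (1 + 1/m) powr (2 / (3 - 2*H))"
  have m: "1 \<le> m" using assms(3) by (simp add: m_def)
  have "(1 + 1/m) powr 1 < c"
    unfolding c_def using assms m by (intro powr_less_mono) (auto simp: field_simps)
  then have c: "1 + 1/m < c" using m by simp
  have xn: "xn H n = m - 1 / (c - 1)" by (simp add: xn_def m_def c_def)
  have "0 < 1/m" using m by simp
  with c have c1: "1 < c" by linarith
  have "1 / (c - 1) < m"
    using c c1 m by (simp add: field_simps)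
  then show "0 < xn H n" unfolding xn by simp
  show "xn H n < real n - 1" using c1 unfolding xn m_def by simp
qed

lemma sigmaH_xn:
  assumes "H < 3/2" "1 < n"
  shows "sigmaH H n (xn H n) = 0"
proof -
  define m where "m = real n - 1"
  define b where "b = 3/2 - H"
  define c where "c = (real n / m) powr (1/b)"
  have m: "1 \<le> m" "real n = m + 1" using assms(2) by (simp_all add: m_def)
  have b: "0 < b" using assms(1) by (simp add: b_def)
  have "1 powr (1/b) < c"
    unfolding c_def using m b by (intro powr_less_mono2) auto
  then have c: "1 < c" by simp
  have cb: "c powr b = real n / m"
    unfolding c_def powr_powr using m b by simp
  have base: "1 + 1/m = real n / m" and exponent: "2 / (3 - 2*H) = 1/b"
    using m by (auto simp: b_def field_simps)
  have xn: "xn H n = m - 1 / (c - 1)"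
    unfolding xn_def m_def[symmetric] base exponent c_def ..
  have "(real n - 1 - xn H n) / (real n - xn H n) = 1 / c"
    unfolding xn using c m(2) by (simp add: m_def field_simps)
  moreover have "(1 / c) powr b = m / real n"
    using c by (simp add: powr_divide cb)
  ultimately show ?thesis
    unfolding sigmaH_def b_def[symmetric] using assms(2) by (simp add: m_def)
qed

lemma sigmaH_less_0_iff:
  assumes "1/2 < H" "H < 3/2" "1 < n" "x < real n - 1"
  shows "sigmaH H n x < 0 \<longleftrightarrow> x < xn H n"
    and "0 < sigmaH H n x \<longleftrightarrow> xn H n < x"
  using strict_mono_on_less[OF strict_mono_on_sigmaH, of H n x "xn H n"]
    strict_mono_on_less[OF strict_mono_on_sigmaH, of H n "xn H n" x]
    sigmaH_xn xn_bounds assms by auto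

lemma psiH_pos:
  assumes "1/2 < H" "0 < x" "x \<le> real n - 1"
  shows "0 < psiH H n x"
proof -
  have "(real n - 1 - x) powr (H - 1/2) < (real n - x) powr (H - 1/2)"
    using assms by (intro powr_less_mono2) auto
  then show ?thesis using assms(2) by (simp add: psiH_def phiH_def)
qed

lemma continuous_on_psiH:
  assumes "1/2 < H"
  shows "continuous_on {0<..real n - 1} (psiH H n)"
  unfolding psiH_def[abs_def] phiH_def
  using assms by (intro continuous_on_mult continuous_on_diff continuous_on_powr' continuous_intros) auto

lemma integrable_on_psiH:
  assumes H: "1/2 < H" "H < 3/2" and cd: "0 \<le> c" "c \<le> d" "d \<le> real n - 1"
  shows "psiH H n integrable_on {c..d}"
proof -
  define K where "K = real n powr (H - 1/2)"
  have "(\<lambda>x. x powr (1/2 - H)) integrable_on {0<..real n - 1}"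
    using H cd by (intro integrable_on_powr_from_0') auto
  then have "(\<lambda>x. K * x powr (1/2 - H)) integrable_on {0<..real n - 1}"
    by (rule integrable_on_mult_right)
  then have "psiH H n integrable_on {0<..real n - 1}"
  proof (rule measurable_bounded_by_integrable_imp_integrable_real[rotated])
    show "psiH H n \<in> borel_measurable (lebesgue_on {0<..real n - 1})"
      using continuous_on_psiH[OF H(1)] by (rule continuous_imp_measurable_on_sets_lebesgue) simp
    fix x assume x: "x \<in> {0<..real n - 1}"
    have "phiH H n x \<le> (real n - x) powr (H - 1/2)"
      unfolding phiH_def by simp
    also have "\<dots> \<le> K" unfolding K_def using x H by (intro powr_mono2) auto
    finally have "phiH H n x \<le> K" .
    moreover have "0 \<le> phiH H n x"
      using psiH_pos[OF H(1), of x n] x by (simp add: psiH_def zero_less_mult_iff)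
    ultimately show "\<bar>psiH H n x\<bar> \<le> K * x powr (1/2 - H)"
      using x by (simp add: psiH_def abs_mult mult_right_mono mult.commute)
  qed simp
  then have "psiH H n integrable_on {0..real n - 1}"
    by (rule integrable_spike_set) (auto intro: negligible_subset[of "{0}"])
  then show ?thesis
    by (rule integrable_on_subinterval) (use cd in auto)
qed

lemma strict_antimono_on_psiH:
  assumes H: "1/2 < H" "H < 3/2" and n: "1 < n"
  shows "strict_antimono_on {0<..xn H n} (psiH H n)"
proof (rule monotone_onI)
  fix s t assume st: "s \<in> {0<..xn H n}" "t \<in> {0<..xn H n}" "s < t"
  show "psiH H n t < psiH H n s"
  proof (rule DERIV_neg_imp_decreasing_open[OF st(3)])
    fix y assume "s < y" "y < t"
    with st xn_bounds[OF H n] have y: "0 < y" "y < xn H n" "y < real n - 1" by auto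
    then have "sigmaH H n y < 0" using sigmaH_less_0_iff(1)[OF H n] by simp
    then show "\<exists>D. (psiH H n has_real_derivative D) (at y) \<and> D < 0"
      using has_real_derivative_psiH[OF y(1,3), of H] H y by (auto intro!: mult_pos_neg)
  next
    show "continuous_on {s..t} (psiH H n)"
      using continuous_on_psiH[OF H(1)] by (rule continuous_on_subset) (use st xn_bounds[OF H n] in auto)
  qed
qed

lemma strict_mono_on_psiH:
  assumes H: "1/2 < H" "H < 3/2" and n: "1 < n"
  shows "strict_mono_on {xn H n..real n - 1} (psiH H n)"
proof (rule monotone_onI)
  fix s t assume st: "s \<in> {xn H n..real n - 1}" "t \<in> {xn H n..real n - 1}" "s < t"
  show "psiH H n s < psiH H n t"
  proof (rule DERIV_pos_imp_increasing_open[OF st(3)])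
    fix y assume "s < y" "y < t"
    with st xn_bounds[OF H n] have y: "0 < y" "xn H n < y" "y < real n - 1" by auto
    then have "0 < sigmaH H n y" using sigmaH_less_0_iff(2)[OF H n] by simp
    then show "\<exists>D. (psiH H n has_real_derivative D) (at y) \<and> D > 0"
      using has_real_derivative_psiH[OF y(1,3), of H] H y by auto
  next
    show "continuous_on {s..t} (psiH H n)"
      using continuous_on_psiH[OF H(1)] by (rule continuous_on_subset) (use st xn_bounds[OF H n] in auto)
  qed
qed

lemma In_pos:
  assumes H: "1/2 < H" "H < 3/2" and i: "1 \<le> i" "i \<le> n - 1"
  shows "0 < In H n i"
proof -
  have i': "1 \<le> real i" "real i \<le> real n - 1" using i by auto
  have nonneg: "0 \<le> psiH H n x" if "0 \<le> x" "x \<le> real n - 1" for x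
    using psiH_pos[OF H(1) _ that(2)] that(1) by (cases "x = 0") (auto simp: psiH_def)
  have "0 = integral {real i - 1/2..real i} (\<lambda>_. 0)" by simp
  also have "\<dots> < integral {real i - 1/2..real i} (psiH H n)"
    using i' by (intro integral_less_real continuous_on_subset[OF continuous_on_psiH[OF H(1)]]
        psiH_pos[OF H(1)]) auto
  also have "\<dots> \<le> integral {real i - 1..real i} (psiH H n)"
    using i' by (intro integral_subset_le integrable_on_psiH H) (auto intro!: nonneg)
  finally show ?thesis by (simp add: In_eq_integral_psiH)
qed

lemma In_less_In_below_xn:
  assumes H: "1/2 < H" "H < 3/2" and n: "1 < n" and ij: "1 \<le> i" "i < j" "real j \<le> xn H n"
  shows "In H n j < In H n i"
  unfolding In_eq_integral_psiH
proof (rule integral_unit_interval_less_of_strict_antimono)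
  show "real i + 1 \<le> real j" using ij by simp
  show "strict_antimono_on {real i - 1<..real j} (psiH H n)"
    by (rule monotone_on_subset[OF strict_antimono_on_psiH[OF H n]]) (use ij in auto)
  show "psiH H n integrable_on {real i - 1..real i}"
    using ij xn_bounds[OF H n] by (intro integrable_on_psiH H) auto
  show "continuous_on {real j - 1..real j} (psiH H n)"
    by (rule continuous_on_subset[OF continuous_on_psiH[OF H(1)]]) (use ij xn_bounds[OF H n] in auto)
qed

lemma In_less_In_above_xn:
  assumes H: "1/2 < H" "H < 3/2" and n: "1 < n" and ij: "xn H n < real i - 1" "i < j" "j \<le> n - 1"
  shows "In H n i < In H n j"
  unfolding In_eq_integral_psiH
proof (rule integral_unit_interval_less_of_strict_mono)
  show "real i + 1 \<le> real j" using ij by simp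
  show "strict_mono_on {real i - 1..real j} (psiH H n)"
    by (rule monotone_on_subset[OF strict_mono_on_psiH[OF H n]]) (use ij in auto)
  show "continuous_on {real i - 1..real j} (psiH H n)"
    by (rule continuous_on_subset[OF continuous_on_psiH[OF H(1)]]) (use ij xn_bounds[OF H n] in auto)
qed

theorem corollaryA2:
  fixes H :: real and n :: nat
  assumes "1/2 < H" and "H < 1" and "1 < n"
  shows "(\<forall>i\<in>{1..n-1}. 0 < In H n i)
    \<and> (\<forall>i j. 1 \<le> i \<and> i < j \<and> int j \<le> i_n H n - 1 \<longrightarrow> In H n j < In H n i)
    \<and> (\<forall>i j. i_n H n + 1 \<le> int i \<and> i < j \<and> j \<le> n - 1 \<longrightarrow> In H n i < In H n j)"
proof -
  have H: "1/2 < H" "H < 3/2" using assms(1,2) by simp_all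
  have below: "real j \<le> xn H n" if "int j \<le> i_n H n - 1" for j :: nat
    using that by (simp add: i_n_def le_floor_iff)
  have above: "xn H n < real i - 1" if "i_n H n + 1 \<le> int i" for i :: nat
    using that floor_less_iff[of "xn H n" "int i - 1"] by (simp add: i_n_def)
  show ?thesis
    using In_pos[OF H] In_less_In_below_xn[OF H assms(3) _ _ below]
      In_less_In_above_xn[OF H assms(3) above] by auto
qed

end
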